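(* Let $(H,k,\chi)$ be an instance of Precoloring Extension with $H=(\{1,\dots,n\},F)$ having at least one edge and $\chi:V_0\to\{1,\dots,k\}$. Let $X=nk+1$; let $u_j=\chi(j)$, $\ell_j=\chi(j)$ for $j\in V_0$ and $u_j=k$, $\ell_j=1$ for $j\notin V_0$. Construct a $P_n\,|\,\mathrm{conc}\,|\,\sum C_j$ instance: jobs $1,\dots,n$ with $p_j=1$ and conflict graph initially $H$; for each $j\in\{1,\dots,n\}$, jobs $j(1),\dots,j(X)$ with processing time $X-u_j$, each in conflict with $j$, and for each $i\in\{1,\dots,X\}$ jobs $j(i,1),\dots,j(i,X)$ with processing time $u_j$, each in conflict with $j(i)$; for each $j\in V_0$ with $\chi(j)>1$, jobs $j^*(1),\dots,j^*(X)$ with processing time $\ell_j-1$, each in conflict with $j$ only. Let $K=\sum_{j=1}^n\big[(1+u_j)X^2+(\ell_j-1)X\big]+nk$. If $(H,k,\chi)$ has a solution $\chi':\{1,\dots,n\}\to\{1,\dots,k\}$, then the constructed instance has a feasible schedule with total completion time at most $K$.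
   Context: Precoloring Extension: given a graph $H=(V,F)$, an integer $k$, and a proper coloring $\chi:V_0\to\{1,\dots,k\}$ of $H[V_0]$ for some $V_0\subseteq V$, a solution is a proper coloring $\chi':V\to\{1,\dots,k\}$ of $H$ with $\chi'(v)=\chi(v)$ for all $v\in V_0$. In $P_n\,|\,\mathrm{conc}\,|\,\sum C_j$, each job $j$ has integer processing time $p_j\ge1$ and release time $0$, and there is a conflict graph $G$ (the edges listed); a schedule assigning completion times $C_j\in\mathbb{N}$ is feasible if $C_j-p_j\ge0$ for all $j$ and $[C_i-p_i,C_i)\cap[C_j-p_j,C_j)=\emptyset$ for all conflicting pairs $\{i,j\}$; the total completion time is $\sum_j C_j$ over all jobs. *)

theory Defs
  imports Main
begin

definition graph_on :: "nat \<Rightarrow> nat set set \<Rightarrow> bool" where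
  "graph_on n F \<longleftrightarrow> (\<forall>e\<in>F. e \<subseteq> {1..n} \<and> card e = 2)"

definition pce_instance :: "nat \<Rightarrow> nat set set \<Rightarrow> nat \<Rightarrow> nat set \<Rightarrow> (nat \<Rightarrow> nat) \<Rightarrow> bool" where
  "pce_instance n F k V0 chi \<longleftrightarrow> graph_on n F \<and> V0 \<subseteq> {1..n} \<and>
     (\<forall>v\<in>V0. chi v \<in> {1..k}) \<and>
     (\<forall>a\<in>V0. \<forall>b\<in>V0. {a,b} \<in> F \<longrightarrow> chi a \<noteq> chi b)"

definition pce_solution :: "nat \<Rightarrow> nat set set \<Rightarrow> nat \<Rightarrow> nat set \<Rightarrow> (nat \<Rightarrow> nat) \<Rightarrow> (nat \<Rightarrow> nat) \<Rightarrow> bool" where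
  "pce_solution n F k V0 chi chi' \<longleftrightarrow>
     (\<forall>v\<in>{1..n}. chi' v \<in> {1..k}) \<and>
     (\<forall>a\<in>{1..n}. \<forall>b\<in>{1..n}. {a,b} \<in> F \<longrightarrow> chi' a \<noteq> chi' b) \<and>
     (\<forall>v\<in>V0. chi' v = chi v)"

definition feasible_schedule :: "'j set \<Rightarrow> ('j \<Rightarrow> nat) \<Rightarrow> 'j set set \<Rightarrow> ('j \<Rightarrow> nat) \<Rightarrow> bool" where
  "feasible_schedule J p E C \<longleftrightarrow>
     (\<forall>j\<in>J. p j \<le> C j) \<and>
     (\<forall>a b. {a,b} \<in> E \<longrightarrow> {C a - p a..<C a} \<inter> {C b - p b..<C b} = {})"

definition total_completion :: "'j set \<Rightarrow> ('j \<Rightarrow> nat) \<Rightarrow> nat" where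
  "total_completion J C = (\<Sum>j\<in>J. C j)"

text \<open>Base j = job j; Aux j i = j(i); AuxAux j i m = j(i,m); Star j i = j*(i).\<close>
datatype job = Base nat | Aux nat nat | AuxAux nat nat nat | Star nat nat

definition bigX :: "nat \<Rightarrow> nat \<Rightarrow> nat" where
  "bigX n k = n * k + 1"

definition uu :: "nat \<Rightarrow> nat set \<Rightarrow> (nat \<Rightarrow> nat) \<Rightarrow> nat \<Rightarrow> nat" where
  "uu k V0 chi j = (if j \<in> V0 then chi j else k)"

definition ll :: "nat set \<Rightarrow> (nat \<Rightarrow> nat) \<Rightarrow> nat \<Rightarrow> nat" where
  "ll V0 chi j = (if j \<in> V0 then chi j else 1)"

definition red_jobs :: "nat \<Rightarrow> nat \<Rightarrow> nat set \<Rightarrow> (nat \<Rightarrow> nat) \<Rightarrow> job set" where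
  "red_jobs n k V0 chi =
     {Base j | j. j \<in> {1..n}} \<union>
     {Aux j i | j i. j \<in> {1..n} \<and> i \<in> {1..bigX n k}} \<union>
     {AuxAux j i m | j i m. j \<in> {1..n} \<and> i \<in> {1..bigX n k} \<and> m \<in> {1..bigX n k}} \<union>
     {Star j i | j i. j \<in> V0 \<and> chi j > 1 \<and> i \<in> {1..bigX n k}}"

fun red_p :: "nat \<Rightarrow> nat \<Rightarrow> nat set \<Rightarrow> (nat \<Rightarrow> nat) \<Rightarrow> job \<Rightarrow> nat" where
  "red_p n k V0 chi (Base j) = 1"
| "red_p n k V0 chi (Aux j i) = bigX n k - uu k V0 chi j"
| "red_p n k V0 chi (AuxAux j i m) = uu k V0 chi j"
| "red_p n k V0 chi (Star j i) = ll V0 chi j - 1"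

definition red_edges :: "nat \<Rightarrow> nat set set \<Rightarrow> nat \<Rightarrow> nat set \<Rightarrow> (nat \<Rightarrow> nat) \<Rightarrow> job set set" where
  "red_edges n F k V0 chi =
     {{Base a, Base b} | a b. {a,b} \<in> F} \<union>
     {{Aux j i, Base j} | j i. j \<in> {1..n} \<and> i \<in> {1..bigX n k}} \<union>
     {{AuxAux j i m, Aux j i} | j i m. j \<in> {1..n} \<and> i \<in> {1..bigX n k} \<and> m \<in> {1..bigX n k}} \<union>
     {{Star j i, Base j} | j i. j \<in> V0 \<and> chi j > 1 \<and> i \<in> {1..bigX n k}}"

definition red_K :: "nat \<Rightarrow> nat \<Rightarrow> nat set \<Rightarrow> (nat \<Rightarrow> nat) \<Rightarrow> nat" where
  "red_K n k V0 chi =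
     (\<Sum>j=1..n. (1 + uu k V0 chi j) * (bigX n k)^2 + (ll V0 chi j - 1) * bigX n k) + n * k"

end

theory Submission
  imports Defs
begin

text \<open>
  The colour \<open>c j\<close> of vertex \<open>j\<close> becomes the unit time slot \<open>[c j - 1, c j)\<close> of job \<open>j\<close>, so
  adjacent vertices get disjoint slots. Every \<open>j(i,m)\<close> runs in \<open>[0, u j)\<close> and every \<open>j(i)\<close>
  in \<open>[u j, X)\<close>, which avoids job \<open>j\<close> because \<open>c j \<le> u j\<close>; every \<open>j*(i)\<close> runs in
  \<open>[0, \<ell> j - 1)\<close>, which for a precoloured \<open>j\<close> is exactly the time before the slot of \<open>j\<close>.
  Per vertex the completion times then add up to \<open>(1 + u j) X\<^sup>2 + (\<ell> j - 1) X + c j\<close>,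
  and \<open>c j \<le> k\<close>.
\<close>

fun red_schedule :: "nat \<Rightarrow> nat \<Rightarrow> nat set \<Rightarrow> (nat \<Rightarrow> nat) \<Rightarrow> (nat \<Rightarrow> nat) \<Rightarrow> job \<Rightarrow> nat" where
  "red_schedule n k V0 chi c (Base j) = c j"
| "red_schedule n k V0 chi c (Aux j i) = bigX n k"
| "red_schedule n k V0 chi c (AuxAux j i m) = uu k V0 chi j"
| "red_schedule n k V0 chi c (Star j i) = ll V0 chi j - 1"

lemma atLeastLessThan_diff_disjoint:
  fixes a b p q :: nat
  assumes "a \<le> b - q"
  shows "{a - p..<a} \<inter> {b - q..<b} = {}"
  using assms by auto

lemma red_edges_cases:
  assumes "{x, y} \<in> red_edges n F k V0 chi"
  obtains (base) a b where "{x, y} = {Base a, Base b}" "{a, b} \<in> F"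
  | (aux) j i where "{x, y} = {Aux j i, Base j}" "j \<in> {1..n}"
  | (aux_aux) j i m where "{x, y} = {AuxAux j i m, Aux j i}" "j \<in> {1..n}"
  | (star) j i where "{x, y} = {Star j i, Base j}" "j \<in> V0" "1 < chi j"
  using assms unfolding red_edges_def by blast

lemma red_schedule_feasible:
  assumes inst: "pce_instance n F k V0 chi"
    and sol: "pce_solution n F k V0 chi c"
  shows "feasible_schedule (red_jobs n k V0 chi) (red_p n k V0 chi) (red_edges n F k V0 chi)
           (red_schedule n k V0 chi c)"
proof -
  define C where "C = red_schedule n k V0 chi c"
  define p where "p = red_p n k V0 chi"
  define separated where "separated x y \<longleftrightarrow> {C x - p x..<C x} \<inter> {C y - p y..<C y} = {}" for x y
  have separated_sym: "separated x y \<longleftrightarrow> separated y x" for x y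
    unfolding separated_def by blast
  have colour_range: "1 \<le> c j" "c j \<le> k" if "j \<in> {1..n}" for j
    using sol that unfolding pce_solution_def by auto
  have colour_le_uu: "c j \<le> uu k V0 chi j" if "j \<in> {1..n}" for j
    using sol colour_range[OF that] unfolding pce_solution_def uu_def by auto
  have uu_le_bigX: "uu k V0 chi j \<le> bigX n k" if "j \<in> {1..n}" for j
  proof -
    have "uu k V0 chi j \<le> k"
      using inst unfolding pce_instance_def uu_def by auto
    moreover have "k \<le> n * k"
      using that by simp
    ultimately show ?thesis
      unfolding bigX_def by linarith
  qed
  have "separated x y" if "{x, y} \<in> red_edges n F k V0 chi" for x y
    using that
  proof (cases rule: red_edges_cases)
    case (base a b)
    have "{a, b} \<subseteq> {1..n}" "card {a, b} = 2"
      using inst base(2) unfolding pce_instance_def graph_on_def by auto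
    then have "a \<in> {1..n}" "b \<in> {1..n}" "a \<noteq> b"
      by (auto simp: card_insert_if split: if_splits)
    then have "c a \<noteq> c b"
      using sol base(2) unfolding pce_solution_def by blast
    then have "separated (Base a) (Base b)"
      by (auto simp: separated_def C_def p_def)
    then show ?thesis
      using base(1) separated_sym by (auto simp: doubleton_eq_iff)
  next
    case (aux j i)
    have "separated (Base j) (Aux j i)"
      unfolding separated_def C_def p_def
      using colour_le_uu[OF aux(2)] uu_le_bigX[OF aux(2)]
      by (intro atLeastLessThan_diff_disjoint) simp
    then show ?thesis
      using aux(1) separated_sym by (auto simp: doubleton_eq_iff)
  next
    case (aux_aux j i m)
    have "separated (AuxAux j i m) (Aux j i)"
      unfolding separated_def C_def p_def
      using uu_le_bigX[OF aux_aux(2)]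
      by (intro atLeastLessThan_diff_disjoint) simp
    then show ?thesis
      using aux_aux(1) separated_sym by (auto simp: doubleton_eq_iff)
  next
    case (star j i)
    have "c j = chi j"
      using sol star(2) unfolding pce_solution_def by blast
    then have "separated (Star j i) (Base j)"
      unfolding separated_def C_def p_def
      using star(2) by (intro atLeastLessThan_diff_disjoint) (simp add: ll_def)
    then show ?thesis
      using star(1) separated_sym by (auto simp: doubleton_eq_iff)
  qed
  moreover have "p x \<le> C x" if "x \<in> red_jobs n k V0 chi" for x
    using that colour_range unfolding red_jobs_def C_def p_def by auto
  ultimately show ?thesis
    unfolding feasible_schedule_def separated_def C_def p_def by blast
qed

lemma sum_image_case_prod:
  assumes "inj_on (case_prod f) (A \<times> B)"
  shows "sum g (case_prod f ` (A \<times> B)) = (\<Sum>a\<in>A. \<Sum>b\<in>B. g (f a b))"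
  using assms by (simp add: sum.reindex sum.cartesian_product case_prod_unfold)

lemma red_jobs_eq:
  "red_jobs n k V0 chi =
     Base ` {1..n} \<union> case_prod Aux ` ({1..n} \<times> {1..bigX n k})
     \<union> (\<lambda>(j, i, m). AuxAux j i m) ` ({1..n} \<times> {1..bigX n k} \<times> {1..bigX n k})
     \<union> case_prod Star ` ({j \<in> V0. 1 < chi j} \<times> {1..bigX n k})"
  unfolding red_jobs_def by (rule set_eqI) (auto simp: image_iff)

lemma sum_red_jobs:
  fixes g :: "job \<Rightarrow> 'a::comm_monoid_add"
  assumes "V0 \<subseteq> {1..n}"
  shows "sum g (red_jobs n k V0 chi) =
           (\<Sum>j=1..n. g (Base j))
           + (\<Sum>j=1..n. \<Sum>i=1..bigX n k. g (Aux j i))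
           + (\<Sum>j=1..n. \<Sum>i=1..bigX n k. \<Sum>m=1..bigX n k. g (AuxAux j i m))
           + (\<Sum>j\<in>{j \<in> V0. 1 < chi j}. \<Sum>i=1..bigX n k. g (Star j i))"
proof -
  define N where "N = {1..n}"
  define I where "I = {1..bigX n k}"
  define S where "S = {j \<in> V0. 1 < chi j}"
  let ?A = "Base ` N" and ?B = "case_prod Aux ` (N \<times> I)"
    and ?C = "(\<lambda>(j, i, m). AuxAux j i m) ` (N \<times> I \<times> I)" and ?D = "case_prod Star ` (S \<times> I)"
  have fin: "finite N" "finite I" "finite S"
    using assms unfolding N_def I_def S_def by (auto intro: finite_subset)
  have "sum g (red_jobs n k V0 chi) = sum g (?A \<union> ?B \<union> ?C \<union> ?D)"
    unfolding red_jobs_eq N_def I_def S_def ..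
  also have "\<dots> = sum g (?A \<union> ?B \<union> ?C) + sum g ?D"
    using fin by (intro sum.union_disjoint) auto
  also have "sum g (?A \<union> ?B \<union> ?C) = sum g (?A \<union> ?B) + sum g ?C"
    using fin by (intro sum.union_disjoint) auto
  also have "sum g (?A \<union> ?B) = sum g ?A + sum g ?B"
    using fin by (intro sum.union_disjoint) auto
  also have "sum g ?A = (\<Sum>j\<in>N. g (Base j))"
    by (simp add: sum.reindex inj_on_def)
  also have "sum g ?B = (\<Sum>j\<in>N. \<Sum>i\<in>I. g (Aux j i))"
    by (simp add: sum_image_case_prod inj_on_def)
  also have "sum g ?C = (\<Sum>j\<in>N. \<Sum>i\<in>I. \<Sum>m\<in>I. g (AuxAux j i m))"
    using sum_image_case_prod[of "\<lambda>j. case_prod (AuxAux j)" N "I \<times> I" g]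
    by (simp add: inj_on_def sum.cartesian_product')
  also have "sum g ?D = (\<Sum>j\<in>S. \<Sum>i\<in>I. g (Star j i))"
    by (simp add: sum_image_case_prod inj_on_def)
  finally show ?thesis
    unfolding N_def I_def S_def .
qed

lemma red_total_completion:
  assumes "V0 \<subseteq> {1..n}"
  shows "total_completion (red_jobs n k V0 chi) (red_schedule n k V0 chi c) =
           (\<Sum>j=1..n. c j)
           + (\<Sum>j=1..n. (1 + uu k V0 chi j) * (bigX n k)\<^sup>2 + (ll V0 chi j - 1) * bigX n k)"
proof -
  define X where "X = bigX n k"
  define u where "u = uu k V0 chi"
  define l where "l = ll V0 chi"
  have "total_completion (red_jobs n k V0 chi) (red_schedule n k V0 chi c) =
          (\<Sum>j=1..n. c j) + (\<Sum>j=1..n. X * X) + (\<Sum>j=1..n. X * X * u j)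
          + (\<Sum>j\<in>{j \<in> V0. 1 < chi j}. X * (l j - 1))"
    unfolding total_completion_def sum_red_jobs[OF assms] by (simp add: X_def u_def l_def mult.assoc)
  also have "(\<Sum>j\<in>{j \<in> V0. 1 < chi j}. X * (l j - 1)) = (\<Sum>j=1..n. X * (l j - 1))"
    \<comment> \<open>Off this set the processing time \<open>l j - 1\<close> of the star jobs vanishes.\<close>
    using assms by (intro sum.mono_neutral_left) (auto simp: l_def ll_def)
  also have "(\<Sum>j=1..n. c j) + (\<Sum>j=1..n. X * X) + (\<Sum>j=1..n. X * X * u j)
      + (\<Sum>j=1..n. X * (l j - 1))
      = (\<Sum>j=1..n. c j) + (\<Sum>j=1..n. (1 + u j) * X\<^sup>2 + (l j - 1) * X)"
    by (simp add: sum.distrib power2_eq_square algebra_simps)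
  finally show ?thesis
    unfolding X_def u_def l_def .
qed

theorem lemma11:
  fixes n k :: nat and F :: "nat set set" and V0 :: "nat set" and chi :: "nat \<Rightarrow> nat"
  assumes "pce_instance n F k V0 chi"
    and "F \<noteq> {}"
    and "\<exists>chi'. pce_solution n F k V0 chi chi'"
  shows "\<exists>C. feasible_schedule (red_jobs n k V0 chi) (red_p n k V0 chi) (red_edges n F k V0 chi) C
           \<and> total_completion (red_jobs n k V0 chi) C \<le> red_K n k V0 chi"
proof -
  obtain c where sol: "pce_solution n F k V0 chi c"
    using assms(3) by blast
  have "V0 \<subseteq> {1..n}"
    using assms(1) unfolding pce_instance_def by blast
  have "c j \<le> k" if "j \<in> {1..n}" for j
    using sol that unfolding pce_solution_def by auto
  then have "(\<Sum>j=1..n. c j) \<le> n * k"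
    using sum_bounded_above[of "{1..n}" c k] by simp
  then have "total_completion (red_jobs n k V0 chi) (red_schedule n k V0 chi c) \<le> red_K n k V0 chi"
    unfolding red_total_completion[OF \<open>V0 \<subseteq> {1..n}\<close>] red_K_def by linarith
  then show ?thesis
    using red_schedule_feasible[OF assms(1) sol] by blast
qed

end
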